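(* Let $n\ge 1$ and $d\ge 1$ be integers, let $\mathcal{X}\subset\mathbb{R}^d$ be compact and convex, let $\mathbf{x}_0\in\mathcal{X}$, let $w_0,w_1,\dots,w_n\in\mathbb{R}$, and let $\mathbf{t}_1,\dots,\mathbf{t}_n\in\mathbb{R}^d$. Consider the $n$-player game in which player $i\in[n]=\{1,\dots,n\}$ chooses $\mathbf{x}_i\in\mathcal{X}$ and incurs the loss $$\ell_i(\mathbf{x}_1,\dots,\mathbf{x}_n)=\Big\|w_0\mathbf{x}_0+\sum_{j=1}^n w_j\mathbf{x}_j-\mathbf{t}_i\Big\|_2^2 .$$ Then this game is an (exact) potential game with potential function $$\phi(\mathbf{x}_1,\dots,\mathbf{x}_n)=\Big\|\sum_{i=0}^n w_i\mathbf{x}_i\Big\|_2^2-2\sum_{i=1}^n w_i\mathbf{t}_i^\top\mathbf{x}_i,$$ that is, for every $i\in[n]$, every $(\mathbf{x}_1,\dots,\mathbf{x}_n)\in\mathcal{X}^n$ and every $\mathbf{y}\in\mathcal{X}$, $$\ell_i(\mathbf{x}_i,\mathbf{x}_{-i})-\ell_i(\mathbf{y},\mathbf{x}_{-i})=\phi(\mathbf{x}_i,\mathbf{x}_{-i})-\phi(\mathbf{y},\mathbf{x}_{-i}).$$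
   Context: For a profile $\mathbf{x}=(\mathbf{x}_1,\dots,\mathbf{x}_n)$, $(\mathbf{y},\mathbf{x}_{-i})$ denotes the profile obtained by replacing player $i$'s action $\mathbf{x}_i$ with $\mathbf{y}$ and keeping all other actions fixed. *)

theory Defs
  imports "HOL-Analysis.Analysis"
begin

text \<open>Loss of player i (players 1..n), profile x indexed by nat (only 1..n used).\<close>
definition game_loss ::
  "nat \<Rightarrow> (nat \<Rightarrow> real) \<Rightarrow> ('a::real_inner) \<Rightarrow> (nat \<Rightarrow> 'a) \<Rightarrow> nat \<Rightarrow> (nat \<Rightarrow> 'a) \<Rightarrow> real" where
  "game_loss n w x0 t i x = (norm (w 0 *\<^sub>R x0 + (\<Sum>j=1..n. w j *\<^sub>R x j) - t i))\<^sup>2"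

definition game_potential ::
  "nat \<Rightarrow> (nat \<Rightarrow> real) \<Rightarrow> ('a::real_inner) \<Rightarrow> (nat \<Rightarrow> 'a) \<Rightarrow> (nat \<Rightarrow> 'a) \<Rightarrow> real" where
  "game_potential n w x0 t x =
     (norm (w 0 *\<^sub>R x0 + (\<Sum>i=1..n. w i *\<^sub>R x i)))\<^sup>2 - 2 * (\<Sum>i=1..n. w i * (t i \<bullet> x i))"

end

theory Submission
  imports Defs
begin

text \<open>Expanding the square, \<open>\<parallel>z - t\<parallel>\<^sup>2 = \<parallel>z\<parallel>\<^sup>2 - 2 t\<bullet>z + \<parallel>t\<parallel>\<^sup>2\<close>, so a change of the aggregate
  \<open>z\<close> changes player \<open>i\<close>'s loss by the change of \<open>\<parallel>z\<parallel>\<^sup>2\<close> minus the linear term \<open>2 t\<^sub>i\<bullet>\<Delta>z\<close>.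
  When only player \<open>i\<close> deviates, \<open>\<Delta>z = w\<^sub>i (x\<^sub>i - y)\<close>, and this linear term is exactly
  the change of the \<open>i\<close>-th summand \<open>2 w\<^sub>i t\<^sub>i\<bullet>x\<^sub>i\<close> of the potential; all other summands
  of the potential are unaffected.\<close>

lemma power2_norm_diff_difference:
  fixes z z' t :: "'a::real_inner"
  shows "(norm (z - t))\<^sup>2 - (norm (z' - t))\<^sup>2 = (norm z)\<^sup>2 - (norm z')\<^sup>2 - 2 * (t \<bullet> (z - z'))"
  by (simp add: power2_norm_eq_inner inner_diff_left inner_diff_right inner_commute)

lemma sum_diff_fun_upd:
  fixes g :: "'i \<Rightarrow> 'a \<Rightarrow> 'b::ab_group_add"
  assumes "finite A" and "i \<in> A"
  shows "(\<Sum>j\<in>A. g j (f j)) - (\<Sum>j\<in>A. g j ((f(i := y)) j)) = g i (f i) - g i y"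
proof -
  have "(\<Sum>j\<in>A - {i}. g j ((f(i := y)) j)) = (\<Sum>j\<in>A - {i}. g j (f j))"
    by (rule sum.cong) auto
  then show ?thesis
    using sum.remove[OF assms, of "\<lambda>j. g j (f j)"]
      sum.remove[OF assms, of "\<lambda>j. g j ((f(i := y)) j)"]
    by simp
qed

theorem theorem1:
  fixes X :: "(real ^ 'd) set" and x0 :: "real ^ 'd" and w :: "nat \<Rightarrow> real"
    and t :: "nat \<Rightarrow> real ^ 'd" and n :: nat
  assumes "n \<ge> 1" and "compact X" and "convex X" and "x0 \<in> X"
  shows "\<forall>i\<in>{1..n}. \<forall>x y. (\<forall>j\<in>{1..n}. x j \<in> X) \<longrightarrow> y \<in> X \<longrightarrow>
     game_loss n w x0 t i x - game_loss n w x0 t i (x(i := y))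
       = game_potential n w x0 t x - game_potential n w x0 t (x(i := y))"
proof (intro ballI allI impI)
  \<comment> \<open>The identity is purely algebraic.\<close>
  fix i x y
  assume i: "i \<in> {1..n}"
  let ?z = "\<lambda>x. w 0 *\<^sub>R x0 + (\<Sum>j=1..n. w j *\<^sub>R x j)"
  let ?lin = "\<lambda>x. \<Sum>j=1..n. w j * (t j \<bullet> x j)"
  have "?z x - ?z (x(i := y)) = w i *\<^sub>R x i - w i *\<^sub>R y"
    using sum_diff_fun_upd[of "{1..n}" i "\<lambda>j v. w j *\<^sub>R v" x y] i by simp
  then have aggregate: "?z x - ?z (x(i := y)) = w i *\<^sub>R (x i - y)"
    by (simp add: scaleR_right_diff_distrib)
  have linear: "?lin x - ?lin (x(i := y)) = w i * (t i \<bullet> x i) - w i * (t i \<bullet> y)"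
    using sum_diff_fun_upd[of "{1..n}" i "\<lambda>j v. w j * (t j \<bullet> v)" x y] i by simp
  show "game_loss n w x0 t i x - game_loss n w x0 t i (x(i := y))
       = game_potential n w x0 t x - game_potential n w x0 t (x(i := y))"
    unfolding game_loss_def game_potential_def power2_norm_diff_difference aggregate
    using linear by (simp add: inner_diff_right algebra_simps)
qed

end
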